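(* In the Setting below and under the Standing Assumption, for each fixed $p\in\mathbb{Z}$ there exists a constant $C\ge 0$ depending on $f$ such that $m_{min}(x,N,p)\le C\cdot N+o(N)$ as $N\to\infty$, for all $x\in\mathbb{Q}\cap D$. Consequently $\sigma(x,p)\le C$ for all $x\in\mathbb{Q}\cap D$, and the same bound holds for $\sigma(x)$ whenever it exists.
   Context: Setting. $D\subseteq\mathbb{R}$ is a compact interval and $f:D\to D$ is twice continuously differentiable on $D$ with $f''$ bounded. For $x\in D$ the orbit is $x_0=x$, $x_{n+1}=f(x_n)$. A floating-point number of precision $m$ is a real $s\cdot 2^{e-m}$ with $s,e\in\mathbb{Z}$, $|s|\le 2^m-1$; $rd_m(y)$ denotes rounding of $y$ to a nearest floating-point number of precision $m$. Let $L(a,e):=\sup\{|f'(y)|: y\in[a-e,a+e]\cap D\}$ and fix a function $\bar L$ with $L(a,e)\le\bar L(a,e)\le\min(\bar L_{max},\,L(a,e)+Ke)$ for constants $\bar L_{max},K\ge0$. For $x\in\mathbb{Q}\cap D$ and precision $m\ge1$ the computed sequence is $\hat x_0=rd_m(x)$, $\bar e_0=2^{-m}|\hat x_0|$, $\hat x_{n+1}=rd_m(f(\hat x_n))$, $\bar e_{n+1}=\bar L(\hat x_n,\bar e_n)\bar e_n+2^{-m}|\hat x_{n+1}|$ (all $\hat x_n$ assumed in $D$). For $N\in\mathbb{N}$, $p\in\mathbb{Z}$, $m_{min}(x,N,p)$ is the least $m\ge1$ such that the sequence computed at precision $m$ satisfies $\bar e_n\le\frac{10^{-p}}{1+10^{-p}}|\hat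 x_n|$ for all $n=0,\dots,N$. The loss of significance rate: $\sigma(x,p):=\limsup_{N\to\infty} m_{min}(x,N,p)/N$ and $\sigma(x):=\lim_{p\to\infty}\sigma(x,p)$. Standing Assumption: for the orbit of $x$, $x_n\ne0$ for all $n$ and $\lim_{N\to\infty}\mathrm{ld}(\min\{|x_n|:0\le n\le N\})/N=0$, where $\mathrm{ld}=\log_2$. *)

theory Defs
  imports "HOL-Analysis.Analysis"
begin

definition is_float :: "nat \<Rightarrow> real \<Rightarrow> bool" where
  "is_float m y \<longleftrightarrow> (\<exists>s e :: int. \<bar>s\<bar> \<le> 2 ^ m - 1 \<and>
       y = real_of_int s * 2 powr (real_of_int e - real m))"

definition is_rounding :: "(nat \<Rightarrow> real \<Rightarrow> real) \<Rightarrow> bool" where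
  "is_rounding rd \<longleftrightarrow> (\<forall>m y. m \<ge> 1 \<longrightarrow> is_float m (rd m y) \<and>
       (\<forall>z. is_float m z \<longrightarrow> \<bar>rd m y - y\<bar> \<le> \<bar>z - y\<bar>))"

definition Lsup :: "(real \<Rightarrow> real) \<Rightarrow> real set \<Rightarrow> real \<Rightarrow> real \<Rightarrow> real" where
  "Lsup df D a e = Sup ((\<lambda>y. \<bar>df y\<bar>) ` ({a - e..a + e} \<inter> D))"

text \<open>The computed sequence (hat x_n, bar e_n) at precision m.\<close>
primrec comp_seq :: "(real \<Rightarrow> real) \<Rightarrow> (real \<Rightarrow> real \<Rightarrow> real) \<Rightarrow> (nat \<Rightarrow> real \<Rightarrow> real)
    \<Rightarrow> nat \<Rightarrow> real \<Rightarrow> nat \<Rightarrow> real \<times> real" where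
  "comp_seq f Lb rd m x 0 = (rd m x, 2 powr (- real m) * \<bar>rd m x\<bar>)"
| "comp_seq f Lb rd m x (Suc n) =
     (let xh = fst (comp_seq f Lb rd m x n); e = snd (comp_seq f Lb rd m x n);
          xh' = rd m (f xh)
      in (xh', Lb xh e * e + 2 powr (- real m) * \<bar>xh'\<bar>))"

definition admissible :: "(real \<Rightarrow> real) \<Rightarrow> (real \<Rightarrow> real \<Rightarrow> real) \<Rightarrow> (nat \<Rightarrow> real \<Rightarrow> real)
    \<Rightarrow> real \<Rightarrow> nat \<Rightarrow> int \<Rightarrow> nat \<Rightarrow> bool" where
  "admissible f Lb rd x N p m \<longleftrightarrow> m \<ge> 1 \<and>
     (\<forall>n\<le>N. snd (comp_seq f Lb rd m x n)
        \<le> 10 powr (- real_of_int p) / (1 + 10 powr (- real_of_int p)) * \<bar>fst (comp_seq f Lb rd m x n)\<bar>)"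

definition m_min :: "(real \<Rightarrow> real) \<Rightarrow> (real \<Rightarrow> real \<Rightarrow> real) \<Rightarrow> (nat \<Rightarrow> real \<Rightarrow> real)
    \<Rightarrow> real \<Rightarrow> nat \<Rightarrow> int \<Rightarrow> nat" where
  "m_min f Lb rd x N p = (LEAST m. admissible f Lb rd x N p m)"

definition sigma_p :: "(real \<Rightarrow> real) \<Rightarrow> (real \<Rightarrow> real \<Rightarrow> real) \<Rightarrow> (nat \<Rightarrow> real \<Rightarrow> real)
    \<Rightarrow> real \<Rightarrow> int \<Rightarrow> ereal" where
  "sigma_p f Lb rd x p = limsup (\<lambda>N. ereal (real (m_min f Lb rd x N p) / real N))"

definition standing_assumption :: "(real \<Rightarrow> real) \<Rightarrow> real \<Rightarrow> bool" where
  "standing_assumption f x \<longleftrightarrow> (\<forall>n. (f ^^ n) x \<noteq> 0) \<and>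
     ((\<lambda>N. log 2 (Min ((\<lambda>n. \<bar>(f ^^ n) x\<bar>) ` {0..N})) / real N) \<longlonglongrightarrow> 0)"

end

theory Submission
  imports Defs "HOL-Real_Asymp.Real_Asymp"
begin

(*
  Idea: at precision m, rounding has relative error at most 4 * 2^-m.  Let \<Lambda> \<ge> 1 bound both
  the Lipschitz constant of f on D = [a,b] and the error amplification factor Lb.  One step of
  the computed sequence multiplies the error estimate e_n and the true error |x^_n - x_n| by at
  most \<Lambda> and adds at most 4 * 2^-m * M (M bounds |y| on D), so both stay below
  4 * 2^-m * M * (n+1) * \<Lambda>^n.  Hence the precision test holds up to step N as soon as
  2^m exceeds K0 * (N+1) * \<Lambda>^N / \<mu>_N, where \<mu>_N = min_{n \<le> N} |x_n|.  The Standing Assumption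
  says log \<mu>_N = o(N), so the least such m is (log2 \<Lambda>) N + o(N), giving C = log2 \<Lambda>.
*)

section \<open>Rounding to floating-point numbers\<close>

lemma is_float_uminus: "is_float m z \<Longrightarrow> is_float m (- z)"
  unfolding is_float_def by (metis abs_minus_cancel mult_minus_left of_int_minus)

lemma is_float_zero: "is_float m 0"
  unfolding is_float_def by (rule exI[of _ 0]) auto

text \<open>Every positive real has a floating-point number of precision m within relative distance
  4 * 2^-m: truncate y to a multiple of 2^(k+2-m), where 2^k \<le> y < 2^(k+1).\<close>

lemma float_near_pos:
  assumes y: "y > 0" and m: "m \<ge> 1"
  shows "\<exists>z. is_float m z \<and> \<bar>z - y\<bar> \<le> 4 * 2 powr (- real m) * y"
proof -
  define k where "k = \<lfloor>log 2 y\<rfloor>"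
  have k_lower: "2 powr k \<le> y"
  proof -
    have "2 powr k \<le> 2 powr (log 2 y)" unfolding k_def by simp
    thus ?thesis using y by simp
  qed
  have k_upper: "y < 2 powr (k + 1)"
  proof -
    have "2 powr (log 2 y) < 2 powr (k + 1)" unfolding k_def by simp
    thus ?thesis using y by simp
  qed
  define h where "h = 2 powr (real_of_int (k + 2) - real m)"
  have h_pos: "h > 0" unfolding h_def by simp
  define s where "s = \<lfloor>y / h\<rfloor>"
  have "y / h = y * 2 powr (real m - k - 2)"
    unfolding h_def by (simp add: divide_powr_uminus powr_minus_divide[symmetric] algebra_simps)
  also have "\<dots> < 2 powr (k + 1) * 2 powr (real m - k - 2)"
    using k_upper by (intro mult_strict_right_mono) auto
  also have "\<dots> = 2 powr (real m - 1)" by (simp add: powr_add[symmetric])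
  also have "\<dots> = 2 ^ (m - 1)"
    using m by (simp add: powr_realpow[symmetric] of_nat_diff)
  finally have "real_of_int s < 2 ^ (m - 1)" unfolding s_def by linarith
  hence "s < 2 ^ (m - 1)" by (metis of_int_less_iff of_int_numeral of_int_power)
  moreover have "(2::int) ^ m = 2 * 2 ^ (m - 1)"
    using m by (metis Suc_diff_1 less_le_trans power_Suc zero_less_one)
  moreover have "s \<ge> 0" unfolding s_def using y h_pos by simp
  moreover have "(1::int) \<le> 2 ^ (m - 1)" by simp
  ultimately have s_range: "\<bar>s\<bar> \<le> 2 ^ m - 1" by linarith
  define z where "z = real_of_int s * h"
  have "is_float m z" unfolding is_float_def z_def h_def using s_range by blast
  moreover have "\<bar>z - y\<bar> \<le> 4 * 2 powr (- real m) * y"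
  proof -
    have "s * h \<le> y" "y < (s + 1) * h"
      unfolding s_def using floor_divide_lower[OF h_pos] floor_divide_upper[OF h_pos] by auto
    hence "\<bar>z - y\<bar> \<le> h" unfolding z_def by (simp add: algebra_simps)
    also have "h = 4 * 2 powr (- real m) * 2 powr k"
      unfolding h_def by (simp add: powr_diff powr_add powr_minus divide_inverse)
    also have "\<dots> \<le> 4 * 2 powr (- real m) * y" using k_lower by simp
    finally show ?thesis .
  qed
  ultimately show ?thesis by blast
qed

lemma rounding_relative_error:
  assumes rd: "is_rounding rd" and m: "m \<ge> 1"
  shows "\<bar>rd m y - y\<bar> \<le> 4 * 2 powr (- real m) * \<bar>y\<bar>"
proof -
  have nearest: "\<And>z. is_float m z \<Longrightarrow> \<bar>rd m y - y\<bar> \<le> \<bar>z - y\<bar>"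
    using rd m unfolding is_rounding_def by blast
  consider "y = 0" | "y > 0" | "y < 0" by linarith
  thus ?thesis
  proof cases
    case 1
    thus ?thesis using nearest[OF is_float_zero] by simp
  next
    case 2
    thus ?thesis using float_near_pos[OF 2 m] nearest by fastforce
  next
    case 3
    then obtain z where z: "is_float m z" "\<bar>z - (- y)\<bar> \<le> 4 * 2 powr (- real m) * (- y)"
      using float_near_pos[of "- y" m] m by auto
    have "\<bar>rd m y - y\<bar> \<le> \<bar>(- z) - y\<bar>" using nearest[OF is_float_uminus[OF z(1)]] .
    thus ?thesis using z 3 by simp
  qed
qed

lemma continuous_derivative_Lipschitz:
  fixes f df :: "real \<Rightarrow> real"
  assumes deriv: "\<forall>y\<in>{a..b}. (f has_real_derivative df y) (at y within {a..b})"
    and df_cont: "continuous_on {a..b} df"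
  obtains G where "G \<ge> 0" "\<forall>y\<in>{a..b}. \<bar>df y\<bar> \<le> G"
    "\<forall>u\<in>{a..b}. \<forall>v\<in>{a..b}. \<bar>f u - f v\<bar> \<le> G * \<bar>u - v\<bar>"
proof -
  have "bounded (df ` {a..b})"
    by (intro compact_imp_bounded compact_continuous_image df_cont) simp
  then obtain G0 where G0: "\<forall>y\<in>{a..b}. \<bar>df y\<bar> \<le> G0" unfolding bounded_real by blast
  define G where "G = max 0 G0"
  have df_bound: "\<forall>y\<in>{a..b}. \<bar>df y\<bar> \<le> G" using G0 unfolding G_def by force
  have "\<bar>f u - f v\<bar> \<le> G * \<bar>u - v\<bar>" if "u \<in> {a..b}" "v \<in> {a..b}" for u v
    using field_differentiable_bound[where f' = df and S = "{a..b}" and B = G]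
      deriv df_bound that by auto
  thus ?thesis using that[of G] df_bound unfolding G_def by auto
qed

lemma abs_le_Lsup:
  assumes "\<forall>z\<in>D. \<bar>df z\<bar> \<le> G" and "y \<in> D" and "e \<ge> 0"
  shows "\<bar>df y\<bar> \<le> Lsup df D y e"
  unfolding Lsup_def
proof (rule cSup_upper)
  show "\<bar>df y\<bar> \<in> (\<lambda>y. \<bar>df y\<bar>) ` ({y - e..y + e} \<inter> D)" using assms by auto
  show "bdd_above ((\<lambda>y. \<bar>df y\<bar>) ` ({y - e..y + e} \<inter> D))"
    using assms(1) by (auto intro!: bdd_aboveI[of _ G])
qed

lemma Lb_range:
  assumes df_bound: "\<forall>y\<in>{a..b}. \<bar>df y\<bar> \<le> G"
    and Lb: "\<forall>y\<in>{a..b}. \<forall>e\<ge>0. Lsup df {a..b} y e \<le> Lb y e \<and>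
                 Lb y e \<le> min Lmax (Lsup df {a..b} y e + K * e)"
    and Lmax: "Lmax \<le> \<Lambda>"
  shows "\<forall>y\<in>{a..b}. \<forall>e\<ge>0. 0 \<le> Lb y e \<and> Lb y e \<le> \<Lambda>"
proof (intro ballI allI impI conjI)
  fix y e :: real assume y: "y \<in> {a..b}" and e: "e \<ge> 0"
  show "0 \<le> Lb y e" using abs_le_Lsup[OF df_bound y e] Lb y e
    by (meson abs_ge_zero order_trans)
  show "Lb y e \<le> \<Lambda>" using Lb y e Lmax by force
qed

section \<open>Error propagation in the computed sequence\<close>

text \<open>The error budget \<delta> * M * (n+1) * \<Lambda>^n is stable under one step of the recursion.\<close>

lemma budget_step:
  fixes c \<Lambda> :: real
  assumes "0 \<le> c" "1 \<le> \<Lambda>"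
  shows "\<Lambda> * (c * (real n + 1) * \<Lambda> ^ n) + c \<le> c * (real (Suc n) + 1) * \<Lambda> ^ Suc n"
proof -
  have "c * 1 \<le> c * \<Lambda> ^ Suc n" using assms by (intro mult_left_mono one_le_power) auto
  thus ?thesis by (simp add: algebra_simps)
qed

locale error_analysis =
  fixes a b \<Lambda> M :: real and f :: "real \<Rightarrow> real" and Lb :: "real \<Rightarrow> real \<Rightarrow> real"
    and rd :: "nat \<Rightarrow> real \<Rightarrow> real" and m :: nat and x :: real
  assumes Lipschitz: "\<forall>u\<in>{a..b}. \<forall>v\<in>{a..b}. \<bar>f u - f v\<bar> \<le> \<Lambda> * \<bar>u - v\<bar>"
    and Lambda_ge_1: "1 \<le> \<Lambda>"
    and Lb_bounded: "\<forall>y\<in>{a..b}. \<forall>e\<ge>0. 0 \<le> Lb y e \<and> Lb y e \<le> \<Lambda>"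
    and maps: "\<forall>y\<in>{a..b}. f y \<in> {a..b}"
    and M_bound: "\<forall>y\<in>{a..b}. \<bar>y\<bar> \<le> M"
    and rounding: "\<forall>y. \<bar>rd m y - y\<bar> \<le> 4 * 2 powr (- real m) * \<bar>y\<bar>"
    and start: "x \<in> {a..b}"
    and computed_in: "\<forall>n. fst (comp_seq f Lb rd m x n) \<in> {a..b}"
begin

abbreviation xh :: "nat \<Rightarrow> real" where "xh n \<equiv> fst (comp_seq f Lb rd m x n)"
abbreviation eb :: "nat \<Rightarrow> real" where "eb n \<equiv> snd (comp_seq f Lb rd m x n)"
abbreviation \<delta> :: real where "\<delta> \<equiv> 4 * 2 powr (- real m)"

lemma orbit_in: "(f ^^ n) x \<in> {a..b}"
  by (induction n) (use maps start in auto)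

lemma M_nonneg: "0 \<le> M"
  using M_bound start by force

lemma one_step:
  assumes e_nonneg: "0 \<le> eb n"
  shows "0 \<le> eb (Suc n)"
    and "eb (Suc n) \<le> \<Lambda> * eb n + \<delta> * M"
    and "\<bar>xh (Suc n) - (f ^^ Suc n) x\<bar> \<le> \<Lambda> * \<bar>xh n - (f ^^ n) x\<bar> + \<delta> * M"
proof -
  have step: "comp_seq f Lb rd m x (Suc n)
      = (rd m (f (xh n)), Lb (xh n) (eb n) * eb n + 2 powr (- real m) * \<bar>rd m (f (xh n))\<bar>)"
    by (simp add: Let_def)
  have xh_in: "xh n \<in> {a..b}" using computed_in by blast
  have next_in: "rd m (f (xh n)) \<in> {a..b}" using computed_in[rule_format, of "Suc n"] step by simp
  have Lb_n: "0 \<le> Lb (xh n) (eb n)" "Lb (xh n) (eb n) \<le> \<Lambda>" using Lb_bounded xh_in e_nonneg by auto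
  have rounded_small: "2 powr (- real m) * \<bar>rd m (f (xh n))\<bar> \<le> \<delta> * M"
    using mult_left_mono[OF M_bound[rule_format, OF next_in], of "2 powr (- real m)"] M_nonneg
    by simp
  have eb_next: "eb (Suc n) = Lb (xh n) (eb n) * eb n + 2 powr (- real m) * \<bar>rd m (f (xh n))\<bar>"
    using step by simp
  show "0 \<le> eb (Suc n)" using eb_next Lb_n e_nonneg by simp
  have "Lb (xh n) (eb n) * eb n \<le> \<Lambda> * eb n" using Lb_n e_nonneg by (intro mult_right_mono)
  thus "eb (Suc n) \<le> \<Lambda> * eb n + \<delta> * M" using eb_next rounded_small by linarith
  have "\<bar>rd m (f (xh n)) - f (xh n)\<bar> \<le> \<delta> * \<bar>f (xh n)\<bar>" using rounding by blast
  also have "\<dots> \<le> \<delta> * M" using M_bound maps xh_in by (intro mult_left_mono) auto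
  finally have rounding_part: "\<bar>rd m (f (xh n)) - f (xh n)\<bar> \<le> \<delta> * M" .
  have "\<bar>f (xh n) - f ((f ^^ n) x)\<bar> \<le> \<Lambda> * \<bar>xh n - (f ^^ n) x\<bar>"
    using Lipschitz xh_in orbit_in by blast
  thus "\<bar>xh (Suc n) - (f ^^ Suc n) x\<bar> \<le> \<Lambda> * \<bar>xh n - (f ^^ n) x\<bar> + \<delta> * M"
    using step rounding_part by simp
qed

lemma error_bound:
  shows "0 \<le> eb n \<and> eb n \<le> \<delta> * M * (real n + 1) * \<Lambda> ^ n \<and>
         \<bar>xh n - (f ^^ n) x\<bar> \<le> \<delta> * M * (real n + 1) * \<Lambda> ^ n"
proof (induction n)
  case 0
  have "\<bar>rd m x\<bar> \<le> M" "\<bar>x\<bar> \<le> M"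
    using M_bound computed_in[rule_format, of 0] start by auto
  moreover have "\<bar>rd m x - x\<bar> \<le> \<delta> * \<bar>x\<bar>" using rounding by blast
  ultimately show ?case
    by (auto intro: order.trans mult_left_mono mult_left_mono[of _ _ "2 powr (- real m)"])
next
  case (Suc n)
  define B where "B = \<delta> * M * (real n + 1) * \<Lambda> ^ n"
  have dM: "0 \<le> \<delta> * M" using M_nonneg by simp
  have grow: "\<Lambda> * B + \<delta> * M \<le> \<delta> * M * (real (Suc n) + 1) * \<Lambda> ^ Suc n"
    unfolding B_def using budget_step[OF dM Lambda_ge_1] by (simp add: mult.assoc)
  have IH: "0 \<le> eb n" "eb n \<le> B" "\<bar>xh n - (f ^^ n) x\<bar> \<le> B"
    using Suc.IH unfolding B_def by auto
  have "\<Lambda> * eb n \<le> \<Lambda> * B" "\<Lambda> * \<bar>xh n - (f ^^ n) x\<bar> \<le> \<Lambda> * B"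
    using IH Lambda_ge_1 by (auto intro: mult_left_mono)
  thus ?case using one_step[OF IH(1)] grow by linarith
qed

text \<open>Indeed the budget B then satisfies B \<le> c (\<mu> - B) \<le> c |x^_n|.\<close>

lemma admissible_if_precise:
  assumes m: "m \<ge> 1"
    and mu: "\<forall>n\<le>N. \<mu> \<le> \<bar>(f ^^ n) x\<bar>"
    and c: "c = 10 powr (- real_of_int p) / (1 + 10 powr (- real_of_int p))"
    and precise: "4 * M * (1 + c) / c * (real N + 1) * \<Lambda> ^ N \<le> 2 powr real m * \<mu>"
  shows "admissible f Lb rd x N p m"
  unfolding admissible_def c[symmetric]
proof (intro conjI m allI impI)
  fix n assume n: "n \<le> N"
  define B where "B = \<delta> * M * (real N + 1) * \<Lambda> ^ N"
  have c_pos: "0 < c" unfolding c by (simp add: add_pos_pos)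
  have "(real n + 1) * \<Lambda> ^ n \<le> (real N + 1) * \<Lambda> ^ N"
    using n Lambda_ge_1 by (intro mult_mono power_increasing) auto
  hence "\<delta> * M * ((real n + 1) * \<Lambda> ^ n) \<le> B"
    unfolding B_def using M_nonneg by (simp add: mult_left_mono mult.assoc)
  hence e_le: "eb n \<le> B" and d_le: "\<bar>xh n - (f ^^ n) x\<bar> \<le> B"
    using error_bound[of n] by (simp_all add: mult.assoc)
  have "(1 + c) * B = 2 powr (- real m) * c * (4 * M * (1 + c) / c * (real N + 1) * \<Lambda> ^ N)"
    unfolding B_def using c_pos by (simp add: field_simps)
  also have "\<dots> \<le> 2 powr (- real m) * c * (2 powr real m * \<mu>)"
    using precise c_pos by (intro mult_left_mono) auto
  also have "\<dots> = c * \<mu>" by (simp add: powr_minus field_simps)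
  finally have "B \<le> c * (\<mu> - B)" by (simp add: algebra_simps)
  also have "\<dots> \<le> c * \<bar>xh n\<bar>"
    using mu n d_le c_pos by (intro mult_left_mono) auto
  finally show "eb n \<le> c * \<bar>xh n\<bar>" using e_le by linarith
qed

end

section \<open>Asymptotics of the chosen precision\<close>

lemma le_two_powr_ceiling_log:
  fixes A :: real
  assumes "A > 0"
  shows "A \<le> 2 powr real (nat \<lceil>log 2 A\<rceil> + 1)"
proof -
  have "A = 2 powr (log 2 A)" using assms by simp
  also have "\<dots> \<le> 2 powr real (nat \<lceil>log 2 A\<rceil> + 1)" by (intro powr_mono) linarith+
  finally show ?thesis .
qed

lemma ceiling_log_growth:
  fixes A :: "nat \<Rightarrow> real"
  assumes lim: "(\<lambda>N. log 2 (A N) / real N) \<longlonglongrightarrow> L" and L: "L \<ge> 0" and \<epsilon>: "\<epsilon> > 0"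
  shows "eventually (\<lambda>N. real (nat \<lceil>log 2 (A N)\<rceil> + 1) \<le> (L + \<epsilon>) * real N) sequentially"
proof -
  have "eventually (\<lambda>N. log 2 (A N) / real N < L + \<epsilon> / 2) sequentially"
    using order_tendstoD(2)[OF lim] \<epsilon> by simp
  moreover have "eventually (\<lambda>N. 4 / real N < \<epsilon>) sequentially"
    using order_tendstoD(2)[OF lim_const_over_n \<epsilon>] .
  ultimately show ?thesis using eventually_gt_at_top[of 0]
  proof eventually_elim
    case (elim N)
    hence N: "real N > 0" by simp
    have "real (nat \<lceil>log 2 (A N)\<rceil> + 1) \<le> max 0 (log 2 (A N)) + 2" by linarith
    also have "\<dots> \<le> (L + \<epsilon> / 2) * real N + 2"
      using elim N L \<epsilon> by (simp add: pos_divide_less_eq less_imp_le)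
    also have "\<dots> \<le> (L + \<epsilon>) * real N"
    proof -
      have "2 \<le> \<epsilon> / 2 * real N" using elim N by (simp add: pos_divide_less_eq mult.commute)
      thus ?thesis by (simp add: algebra_simps)
    qed
    finally show ?case .
  qed
qed

lemma precision_growth_rate:
  fixes \<mu> :: "nat \<Rightarrow> real" and K0 \<Lambda> :: real
  assumes mu_pos: "\<forall>N. \<mu> N > 0" and mu_lim: "(\<lambda>N. log 2 (\<mu> N) / real N) \<longlonglongrightarrow> 0"
    and K0: "K0 > 0" and \<Lambda>: "\<Lambda> > 0"
  shows "(\<lambda>N. log 2 (K0 * (real N + 1) * \<Lambda> ^ N / \<mu> N) / real N) \<longlonglongrightarrow> log 2 \<Lambda>"
proof -
  have split_log: "log 2 (K0 * (real N + 1) * \<Lambda> ^ N / \<mu> N)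
      = log 2 K0 + log 2 (real N + 1) + real N * log 2 \<Lambda> - log 2 (\<mu> N)" for N
    using K0 \<Lambda> mu_pos[rule_format, of N]
    by (simp add: log_divide_pos log_mult_pos log_nat_power)
  have "\<forall>\<^sub>F N in sequentially. log 2 (K0 * (real N + 1) * \<Lambda> ^ N / \<mu> N) / real N
      = log 2 K0 / real N + log 2 (real N + 1) / real N + log 2 \<Lambda> - log 2 (\<mu> N) / real N"
    using eventually_gt_at_top[of 0]
    by eventually_elim (simp add: split_log add_divide_distrib diff_divide_distrib)
  moreover have "(\<lambda>N. log 2 K0 / real N + log 2 (real N + 1) / real N + log 2 \<Lambda>
                    - log 2 (\<mu> N) / real N) \<longlonglongrightarrow> 0 + 0 + log 2 \<Lambda> - 0"
    by (intro tendsto_intros mu_lim) real_asymp+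
  ultimately show ?thesis using tendsto_cong by fastforce
qed

lemma limsup_ratio_le:
  fixes u :: "nat \<Rightarrow> real"
  assumes "\<forall>\<epsilon>>0. eventually (\<lambda>N. u N \<le> (C + \<epsilon>) * real N) sequentially"
  shows "limsup (\<lambda>N. ereal (u N / real N)) \<le> ereal C"
proof (rule ereal_le_epsilon2)
  fix \<epsilon> :: real assume "0 < \<epsilon>"
  hence "eventually (\<lambda>N. u N \<le> (C + \<epsilon>) * real N) sequentially" using assms by blast
  hence "eventually (\<lambda>N. ereal (u N / real N) \<le> ereal (C + \<epsilon>)) sequentially"
    using eventually_gt_at_top[of 0] by eventually_elim (simp add: pos_divide_le_eq)
  hence "limsup (\<lambda>N. ereal (u N / real N)) \<le> ereal (C + \<epsilon>)" by (rule Limsup_bounded)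
  thus "limsup (\<lambda>N. ereal (u N / real N)) \<le> ereal C + ereal \<epsilon>" by simp
qed

section \<open>Linear growth of the minimal precision\<close>

lemma m_min_linear_growth:
  fixes f :: "real \<Rightarrow> real" and Lb :: "real \<Rightarrow> real \<Rightarrow> real" and rd :: "nat \<Rightarrow> real \<Rightarrow> real"
  assumes Lipschitz: "\<forall>u\<in>{a..b}. \<forall>v\<in>{a..b}. \<bar>f u - f v\<bar> \<le> \<Lambda> * \<bar>u - v\<bar>"
    and Lambda_ge_1: "1 \<le> \<Lambda>"
    and Lb_bounded: "\<forall>y\<in>{a..b}. \<forall>e\<ge>0. 0 \<le> Lb y e \<and> Lb y e \<le> \<Lambda>"
    and maps: "\<forall>y\<in>{a..b}. f y \<in> {a..b}"
    and M_bound: "\<forall>y\<in>{a..b}. \<bar>y\<bar> \<le> M"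
    and rd: "is_rounding rd"
    and start: "x \<in> {a..b}"
    and computed_in: "\<forall>m\<ge>1. \<forall>n. fst (comp_seq f Lb rd m x n) \<in> {a..b}"
    and standing: "standing_assumption f x"
  shows "\<forall>\<epsilon>>0. eventually (\<lambda>N. (\<exists>m. admissible f Lb rd x N p m) \<and>
           real (m_min f Lb rd x N p) \<le> (log 2 \<Lambda> + \<epsilon>) * real N) sequentially"
proof (intro allI impI)
  fix \<epsilon> :: real assume \<epsilon>: "\<epsilon> > 0"
  define c where "c = 10 powr (- real_of_int p) / (1 + 10 powr (- real_of_int p))"
  define \<mu> where "\<mu> N = Min ((\<lambda>n. \<bar>(f ^^ n) x\<bar>) ` {0..N})" for N
  define K0 where "K0 = 4 * M * (1 + c) / c"
  define A where "A N = K0 * (real N + 1) * \<Lambda> ^ N / \<mu> N" for N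
  define prec where "prec N = nat \<lceil>log 2 (A N)\<rceil> + 1" for N
  have c_pos: "c > 0" unfolding c_def by (simp add: add_pos_pos)
  have mu_pos: "\<forall>N. \<mu> N > 0" using standing unfolding \<mu>_def standing_assumption_def by auto
  have mu_lim: "(\<lambda>N. log 2 (\<mu> N) / real N) \<longlonglongrightarrow> 0"
    using standing unfolding standing_assumption_def \<mu>_def by blast
  have "x \<noteq> 0" using standing unfolding standing_assumption_def by (metis funpow_0)
  hence M_pos: "0 < M" using M_bound start by force
  have K0_pos: "K0 > 0" unfolding K0_def using M_pos c_pos by simp
  have A_pos: "A N > 0" for N unfolding A_def using mu_pos K0_pos Lambda_ge_1 by simp
  have admissible: "admissible f Lb rd x N p (prec N)" for N
  proof -
    have prec_ge_1: "prec N \<ge> 1" unfolding prec_def by simp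
    interpret error_analysis a b \<Lambda> M f Lb rd "prec N" x
      using Lipschitz Lambda_ge_1 Lb_bounded maps M_bound start computed_in prec_ge_1
        rounding_relative_error[OF rd prec_ge_1]
      by unfold_locales auto
    have "A N \<le> 2 powr real (prec N)"
      unfolding prec_def using le_two_powr_ceiling_log[OF A_pos] by simp
    hence "K0 * (real N + 1) * \<Lambda> ^ N \<le> 2 powr real (prec N) * \<mu> N"
      using mu_pos unfolding A_def by (simp add: divide_le_eq)
    moreover have "\<forall>n\<le>N. \<mu> N \<le> \<bar>(f ^^ n) x\<bar>" unfolding \<mu>_def by auto
    ultimately show ?thesis
      using admissible_if_precise[OF prec_ge_1 _ c_def] unfolding K0_def by blast
  qed
  have "(\<lambda>N. log 2 (A N) / real N) \<longlonglongrightarrow> log 2 \<Lambda>"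
    unfolding A_def using precision_growth_rate[OF mu_pos mu_lim K0_pos] Lambda_ge_1 by simp
  hence "eventually (\<lambda>N. real (prec N) \<le> (log 2 \<Lambda> + \<epsilon>) * real N) sequentially"
    unfolding prec_def by (rule ceiling_log_growth) (use Lambda_ge_1 \<epsilon> in auto)
  moreover have "m_min f Lb rd x N p \<le> prec N" for N
    unfolding m_min_def by (rule Least_le, rule admissible)
  ultimately show "eventually (\<lambda>N. (\<exists>m. admissible f Lb rd x N p m) \<and>
           real (m_min f Lb rd x N p) \<le> (log 2 \<Lambda> + \<epsilon>) * real N) sequentially"
    by (auto elim!: eventually_mono intro: admissible order.trans[OF of_nat_mono])
qed

theorem mainTheorem5:
  fixes a b :: real and f df ddf :: "real \<Rightarrow> real"
    and Lb :: "real \<Rightarrow> real \<Rightarrow> real" and Lmax K :: real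
    and rd :: "nat \<Rightarrow> real \<Rightarrow> real"
  assumes ab: "a \<le> b"
    and maps: "\<forall>y\<in>{a..b}. f y \<in> {a..b}"
    and d1: "\<forall>y\<in>{a..b}. (f has_real_derivative df y) (at y within {a..b})"
    and d2: "\<forall>y\<in>{a..b}. (df has_real_derivative ddf y) (at y within {a..b})"
    and d2cont: "continuous_on {a..b} ddf"
    and d2bdd: "bounded (ddf ` {a..b})"
    and LK_nonneg: "Lmax \<ge> 0" "K \<ge> 0"
    and Lb: "\<forall>y\<in>{a..b}. \<forall>e\<ge>0. Lsup df {a..b} y e \<le> Lb y e \<and>
                 Lb y e \<le> min Lmax (Lsup df {a..b} y e + K * e)"
    and rd: "is_rounding rd"
  shows "\<exists>C\<ge>0. \<forall>p::int. \<forall>x\<in>\<rat> \<inter> {a..b}.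
           standing_assumption f x \<longrightarrow>
           (\<forall>m\<ge>1. \<forall>n. fst (comp_seq f Lb rd m x n) \<in> {a..b}) \<longrightarrow>
           ((\<forall>\<epsilon>>0. eventually (\<lambda>N. (\<exists>m. admissible f Lb rd x N p m) \<and>
                 real (m_min f Lb rd x N p) \<le> (C + \<epsilon>) * real N) sequentially)
            \<and> sigma_p f Lb rd x p \<le> ereal C
            \<and> (\<forall>l. ((\<lambda>q. sigma_p f Lb rd x q) \<longlongrightarrow> l) at_top \<longrightarrow> l \<le> ereal C))"
proof -
  have "continuous_on {a..b} df"
    using d2 by (auto simp: continuous_on_eq_continuous_within intro: DERIV_continuous)
  then obtain G where G: "G \<ge> 0" "\<forall>y\<in>{a..b}. \<bar>df y\<bar> \<le> G"
    and Lipschitz_G: "\<forall>u\<in>{a..b}. \<forall>v\<in>{a..b}. \<bar>f u - f v\<bar> \<le> G * \<bar>u - v\<bar>"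
    using continuous_derivative_Lipschitz[OF d1] by blast
  define \<Lambda> where "\<Lambda> = max 1 (max Lmax G)"
  have Lambda_ge_1: "1 \<le> \<Lambda>" unfolding \<Lambda>_def by simp
  have Lipschitz: "\<forall>u\<in>{a..b}. \<forall>v\<in>{a..b}. \<bar>f u - f v\<bar> \<le> \<Lambda> * \<bar>u - v\<bar>"
    using Lipschitz_G by (metis \<Lambda>_def abs_ge_zero max.cobounded2 mult_right_mono order_trans)
  have Lb_bounded: "\<forall>y\<in>{a..b}. \<forall>e\<ge>0. 0 \<le> Lb y e \<and> Lb y e \<le> \<Lambda>"
    by (rule Lb_range[OF G(2) Lb]) (simp add: \<Lambda>_def)
  have M_bound: "\<forall>y\<in>{a..b}. \<bar>y\<bar> \<le> max \<bar>a\<bar> \<bar>b\<bar>" by auto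
  define C where "C = log 2 \<Lambda>"
  have "(\<forall>\<epsilon>>0. eventually (\<lambda>N. (\<exists>m. admissible f Lb rd x N p m) \<and>
                 real (m_min f Lb rd x N p) \<le> (C + \<epsilon>) * real N) sequentially)
        \<and> sigma_p f Lb rd x p \<le> ereal C
        \<and> (\<forall>l. ((\<lambda>q. sigma_p f Lb rd x q) \<longlongrightarrow> l) at_top \<longrightarrow> l \<le> ereal C)"
    if x: "x \<in> {a..b}" and standing: "standing_assumption f x"
      and computed_in: "\<forall>m\<ge>1. \<forall>n. fst (comp_seq f Lb rd m x n) \<in> {a..b}" for x p
  proof -
    note growth = m_min_linear_growth[OF Lipschitz Lambda_ge_1 Lb_bounded maps M_bound rd x
        computed_in standing, folded C_def]
    have sigma: "sigma_p f Lb rd x q \<le> ereal C" for q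
      unfolding sigma_p_def using growth[of q] by (intro limsup_ratio_le) (auto elim: eventually_mono)
    have "l \<le> ereal C" if "((\<lambda>q. sigma_p f Lb rd x q) \<longlongrightarrow> l) at_top" for l
      using that by (rule tendsto_upperbound) (use sigma in auto)
    thus ?thesis using growth sigma by blast
  qed
  moreover have "C \<ge> 0" unfolding C_def using Lambda_ge_1 by simp
  ultimately show ?thesis by blast
qed

end
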